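(* For every graph $\mathcal{G}$ there exists a scattered, locally quasi-compact topological space $X$, which is neither $\mathbf{T}_1$ nor zero-dimensional, such that $\mathrm{Homeo}(X)$ is isomorphic as a topological group to $\mathrm{Aut}(\mathcal{G})$.
   Context: A graph is a pair $(V,E)$ with $E$ a nonempty set of 2-element subsets of $V$ (simple, non-oriented). $\mathrm{Aut}(\mathcal{G})$ is the subgroup of $\mathrm{Sym}(V)$ preserving $E$, with the topology of pointwise convergence on the discrete set $V$. A space is scattered if every nonempty subset has a point isolated in that subset; locally quasi-compact if each point has a quasi-compact neighbourhood (no separation assumed); $\mathbf{T}_1$ if singletons are closed; zero-dimensional if it has a basis of clopen sets. For scattered $X$, $\mathrm{Homeo}(X)$ carries the topology of pointwise convergence on $X$. *)

theory Defs
  imports "HOL-Analysis.Analysis"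
begin

definition is_graph :: "'v set \<Rightarrow> 'v set set \<Rightarrow> bool" where
  "is_graph V E \<longleftrightarrow> E \<noteq> {} \<and> (\<forall>e\<in>E. e \<subseteq> V \<and> card e = 2)"

definition sym_group :: "'a set \<Rightarrow> ('a \<Rightarrow> 'a) set" where
  "sym_group S = {f. bij_betw f S S \<and> (\<forall>x. x \<notin> S \<longrightarrow> f x = x)}"

definition graph_aut :: "'v set \<Rightarrow> 'v set set \<Rightarrow> ('v \<Rightarrow> 'v) set" where
  "graph_aut V E = {f \<in> sym_group V. (\<lambda>e. f ` e) ` E = E}"

definition homeo_group :: "'a topology \<Rightarrow> ('a \<Rightarrow> 'a) set" where
  "homeo_group X = {f. homeomorphic_map X X f \<and> (\<forall>x. x \<notin> topspace X \<longrightarrow> f x = x)}"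

definition pointwise_topology :: "'a set \<Rightarrow> ('a \<Rightarrow> 'a) set \<Rightarrow> ('a \<Rightarrow> 'a) topology" where
  "pointwise_topology S G = topology (\<lambda>U. U \<subseteq> G \<and>
     (\<forall>g\<in>U. \<exists>F. finite F \<and> F \<subseteq> S \<and> {h\<in>G. \<forall>x\<in>F. h x = g x} \<subseteq> U))"

definition top_group_iso ::
  "('a \<Rightarrow> 'a) set \<Rightarrow> ('a \<Rightarrow> 'a) topology \<Rightarrow> ('b \<Rightarrow> 'b) set \<Rightarrow> ('b \<Rightarrow> 'b) topology
     \<Rightarrow> (('a \<Rightarrow> 'a) \<Rightarrow> ('b \<Rightarrow> 'b)) \<Rightarrow> bool" where
  "top_group_iso G TG H TH \<phi> \<longleftrightarrow>
     bij_betw \<phi> G H \<and> (\<forall>f\<in>G. \<forall>g\<in>G. \<phi> (f \<circ> g) = \<phi> f \<circ> \<phi> g) \<and>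
     homeomorphic_map TG TH \<phi>"

definition scattered_space :: "'a topology \<Rightarrow> bool" where
  "scattered_space X \<longleftrightarrow> (\<forall>S. S \<subseteq> topspace X \<and> S \<noteq> {} \<longrightarrow>
     (\<exists>x\<in>S. \<exists>U. openin X U \<and> U \<inter> S = {x}))"

text \<open>Locally quasi-compact: each point has a (quasi-)compact neighbourhood
  (compactin carries no separation axiom).\<close>
definition locally_quasi_compact :: "'a topology \<Rightarrow> bool" where
  "locally_quasi_compact X \<longleftrightarrow> (\<forall>x\<in>topspace X. \<exists>N U.
     openin X U \<and> x \<in> U \<and> U \<subseteq> N \<and> compactin X N)"

definition singletons_closed :: "'a topology \<Rightarrow> bool" where
  "singletons_closed X \<longleftrightarrow> (\<forall>x\<in>topspace X. closedin X {x})"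

definition zero_dimensional :: "'a topology \<Rightarrow> bool" where
  "zero_dimensional X \<longleftrightarrow> (\<exists>\<B>. (\<forall>B\<in>\<B>. openin X B \<and> closedin X B) \<and>
     (\<forall>U. openin X U \<longrightarrow> (\<exists>\<U>. \<U> \<subseteq> \<B> \<and> \<Union>\<U> = U)))"


lemma istopology_pointwise:
  "istopology (\<lambda>U. U \<subseteq> G \<and>
     (\<forall>g\<in>U. \<exists>F. finite F \<and> F \<subseteq> S \<and> {h\<in>G. \<forall>x\<in>F. h x = g x} \<subseteq> U))"
  unfolding istopology_def
proof (rule conjI; intro allI impI)
  fix U V :: "('a \<Rightarrow> 'b) set"
  assume a: "U \<subseteq> G \<and> (\<forall>g\<in>U. \<exists>F. finite F \<and> F \<subseteq> S \<and> {h\<in>G. \<forall>x\<in>F. h x = g x} \<subseteq> U)"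
     and b: "V \<subseteq> G \<and> (\<forall>g\<in>V. \<exists>F. finite F \<and> F \<subseteq> S \<and> {h\<in>G. \<forall>x\<in>F. h x = g x} \<subseteq> V)"
  show "U \<inter> V \<subseteq> G \<and> (\<forall>g\<in>U \<inter> V. \<exists>F. finite F \<and> F \<subseteq> S \<and> {h\<in>G. \<forall>x\<in>F. h x = g x} \<subseteq> U \<inter> V)"
  proof (intro conjI ballI)
    show "U \<inter> V \<subseteq> G" using a by blast
  next
    fix g assume g: "g \<in> U \<inter> V"
    obtain F1 where "finite F1" "F1 \<subseteq> S" "{h\<in>G. \<forall>x\<in>F1. h x = g x} \<subseteq> U"
      using a g by blast
    moreover obtain F2 where "finite F2" "F2 \<subseteq> S" "{h\<in>G. \<forall>x\<in>F2. h x = g x} \<subseteq> V"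
      using b g by blast
    ultimately show "\<exists>F. finite F \<and> F \<subseteq> S \<and> {h\<in>G. \<forall>x\<in>F. h x = g x} \<subseteq> U \<inter> V"
      by (intro exI[of _ "F1 \<union> F2"]) auto
  qed
next
  fix K :: "('a \<Rightarrow> 'b) set set"
  assume "\<forall>U\<in>K. U \<subseteq> G \<and> (\<forall>g\<in>U. \<exists>F. finite F \<and> F \<subseteq> S \<and> {h\<in>G. \<forall>x\<in>F. h x = g x} \<subseteq> U)"
  then show "\<Union>K \<subseteq> G \<and> (\<forall>g\<in>\<Union>K. \<exists>F. finite F \<and> F \<subseteq> S \<and> {h\<in>G. \<forall>x\<in>F. h x = g x} \<subseteq> \<Union>K)"
    by (smt (verit, best) UnionE Union_upper order_trans Sup_least)
qed

end

(*
  Take for X the vertices and edges of the graph, ordered by incidence, with the Alexandrov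
  topology whose open sets are the up-closed sets; a vertex v is the point ({v}, 0) and an edge
  e the point (e, 1), so that incidence is the product order of 'v set \<times> nat.  Homeomorphisms
  of an Alexandrov space are exactly the order automorphisms.  These preserve the minimal
  points, i.e. the vertices, and move an edge point according to its two endpoints, so
  restriction to the vertices is an isomorphism onto Aut(G); it is bicontinuous for pointwise
  convergence because the image of a vertex is read off one point and the image of an edge
  point off its two endpoints.  The upset of a point is a compact open neighbourhood, and it
  isolates a point of maximal level in any set, so X is locally quasi-compact and scattered.
  An edge point lies in every neighbourhood of its endpoints, so it is not closed; and a clopen
  set containing one endpoint contains the edge point and hence the other endpoint, which is
  not in the smallest neighbourhood of the first, so X has no clopen basis.
*)

theory Submission
  imports Defs
begin

section \<open>Alexandrov topologies\<close>

definition alexandrov_topology :: "'a::preorder set \<Rightarrow> 'a topology" where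
  "alexandrov_topology P = topology (\<lambda>U. U \<subseteq> P \<and> (\<forall>a\<in>U. \<forall>b\<in>P. a \<le> b \<longrightarrow> b \<in> U))"

lemma openin_alexandrov_topology:
  "openin (alexandrov_topology P) U \<longleftrightarrow> U \<subseteq> P \<and> (\<forall>a\<in>U. \<forall>b\<in>P. a \<le> b \<longrightarrow> b \<in> U)"
proof -
  have "istopology (\<lambda>U. U \<subseteq> P \<and> (\<forall>a\<in>U. \<forall>b\<in>P. a \<le> b \<longrightarrow> b \<in> U))"
    unfolding istopology_def by blast
  then show ?thesis
    by (simp add: alexandrov_topology_def)
qed

lemma topspace_alexandrov_topology [simp]: "topspace (alexandrov_topology P) = P"
  unfolding topspace_def openin_alexandrov_topology by blast

lemma openin_alexandrov_topology_upset: "openin (alexandrov_topology P) {b\<in>P. a \<le> b}"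
  unfolding openin_alexandrov_topology using order_trans by blast

lemma openin_alexandrov_topology_upward:
  "openin (alexandrov_topology P) U \<Longrightarrow> a \<in> U \<Longrightarrow> b \<in> P \<Longrightarrow> a \<le> b \<Longrightarrow> b \<in> U"
  unfolding openin_alexandrov_topology by blast

lemma continuous_map_alexandrov_topology:
  "continuous_map (alexandrov_topology P) (alexandrov_topology Q) f \<longleftrightarrow>
     f ` P \<subseteq> Q \<and> (\<forall>a\<in>P. \<forall>b\<in>P. a \<le> b \<longrightarrow> f a \<le> f b)"
proof
  assume f: "continuous_map (alexandrov_topology P) (alexandrov_topology Q) f"
  have "f a \<le> f b" if "a \<in> P" "b \<in> P" "a \<le> b" for a b
  proof -
    have "openin (alexandrov_topology P) {x \<in> P. f x \<in> {y\<in>Q. f a \<le> y}}"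
      using openin_continuous_map_preimage[OF f openin_alexandrov_topology_upset] by simp
    moreover have "a \<in> {x \<in> P. f x \<in> {y\<in>Q. f a \<le> y}}"
      using continuous_map_image_subset_topspace[OF f] that(1) by auto
    ultimately show ?thesis
      using that(2,3) by (blast dest: openin_alexandrov_topology_upward)
  qed
  then show "f ` P \<subseteq> Q \<and> (\<forall>a\<in>P. \<forall>b\<in>P. a \<le> b \<longrightarrow> f a \<le> f b)"
    using continuous_map_image_subset_topspace[OF f] by simp
next
  assume f: "f ` P \<subseteq> Q \<and> (\<forall>a\<in>P. \<forall>b\<in>P. a \<le> b \<longrightarrow> f a \<le> f b)"
  have "openin (alexandrov_topology P) {x\<in>P. f x \<in> U}"
    if U: "openin (alexandrov_topology Q) U" for U
  proof -
    have "f b \<in> U" if "a \<in> P" "f a \<in> U" "b \<in> P" "a \<le> b" for a b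
    proof (rule openin_alexandrov_topology_upward[OF U \<open>f a \<in> U\<close>])
      show "f b \<in> Q" "f a \<le> f b"
        using f that by blast+
    qed
    then show ?thesis
      unfolding openin_alexandrov_topology by blast
  qed
  then show "continuous_map (alexandrov_topology P) (alexandrov_topology Q) f"
    using f by (simp add: continuous_map)
qed

lemma homeomorphic_map_alexandrov_topology:
  "homeomorphic_map (alexandrov_topology P) (alexandrov_topology Q) h \<longleftrightarrow>
     bij_betw h P Q \<and> (\<forall>a\<in>P. \<forall>b\<in>P. h a \<le> h b \<longleftrightarrow> a \<le> b)"
proof
  assume h: "homeomorphic_map (alexandrov_topology P) (alexandrov_topology Q) h"
  then have bij: "bij_betw h P Q"
    using homeomorphic_imp_injective_map[OF h] homeomorphic_imp_surjective_map[OF h]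
    by (simp add: bij_betw_def)
  have "a \<le> b" if "a \<in> P" "b \<in> P" "h a \<le> h b" for a b
  proof -
    have "openin (alexandrov_topology Q) (h ` {c\<in>P. a \<le> c})"
      using homeomorphic_imp_open_map[OF h] openin_alexandrov_topology_upset
      unfolding open_map_def by blast
    moreover have "h a \<in> h ` {c\<in>P. a \<le> c}" "h b \<in> Q"
      using that bij_betwE[OF bij] by auto
    ultimately have "h b \<in> h ` {c\<in>P. a \<le> c}"
      using that(3) by (rule openin_alexandrov_topology_upward)
    then obtain c where "c \<in> P" "a \<le> c" "h b = h c"
      by blast
    moreover have "b = c"
      using inj_onD[OF bij_betw_imp_inj_on[OF bij] \<open>h b = h c\<close> \<open>b \<in> P\<close> \<open>c \<in> P\<close>] .
    ultimately show ?thesis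
      by simp
  qed
  moreover have "a \<le> b \<Longrightarrow> h a \<le> h b" if "a \<in> P" "b \<in> P" for a b
    using homeomorphic_imp_continuous_map[OF h] that
    unfolding continuous_map_alexandrov_topology by blast
  ultimately show "bij_betw h P Q \<and> (\<forall>a\<in>P. \<forall>b\<in>P. h a \<le> h b \<longleftrightarrow> a \<le> b)"
    using bij by blast
next
  assume h: "bij_betw h P Q \<and> (\<forall>a\<in>P. \<forall>b\<in>P. h a \<le> h b \<longleftrightarrow> a \<le> b)"
  then have hP: "h ` P = Q" and inj: "inj_on h P"
    by (simp_all add: bij_betw_def)
  have "openin (alexandrov_topology Q) (h ` U)" if U: "openin (alexandrov_topology P) U" for U
    unfolding openin_alexandrov_topology
  proof (intro conjI ballI impI)
    have "U \<subseteq> P"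
      using U by (simp add: openin_alexandrov_topology)
    then show "h ` U \<subseteq> Q"
      using hP by blast
    fix c d assume "c \<in> h ` U" "d \<in> Q" "c \<le> d"
    then obtain a b where "a \<in> U" "c = h a" "b \<in> P" "d = h b"
      using hP by blast
    moreover have "a \<le> b"
      using h \<open>c \<le> d\<close> calculation \<open>U \<subseteq> P\<close> by blast
    ultimately show "d \<in> h ` U"
      using openin_alexandrov_topology_upward[OF U] by blast
  qed
  moreover have "continuous_map (alexandrov_topology P) (alexandrov_topology Q) h"
    unfolding continuous_map_alexandrov_topology using h hP by blast
  ultimately show "homeomorphic_map (alexandrov_topology P) (alexandrov_topology Q) h"
    using hP inj by (intro bijective_open_imp_homeomorphic_map) (simp_all add: open_map_def)
qed

lemma homeo_group_alexandrov_topology: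
  "homeo_group (alexandrov_topology P) =
     {h. bij_betw h P P \<and> (\<forall>a\<in>P. \<forall>b\<in>P. h a \<le> h b \<longleftrightarrow> a \<le> b) \<and> (\<forall>x. x \<notin> P \<longrightarrow> h x = x)}"
  by (simp add: homeo_group_def homeomorphic_map_alexandrov_topology)

lemma order_iso_minimal_iff:
  assumes "bij_betw h P Q" "\<forall>a\<in>P. \<forall>b\<in>P. h a \<le> h b \<longleftrightarrow> a \<le> b" "a \<in> P"
  shows "(\<forall>c\<in>Q. c \<le> h a \<longrightarrow> c = h a) \<longleftrightarrow> (\<forall>b\<in>P. b \<le> a \<longrightarrow> b = a)"
proof -
  have "h b = h a \<longleftrightarrow> b = a" if "b \<in> P" for b
    using inj_on_eq_iff[OF bij_betw_imp_inj_on[OF assms(1)] that assms(3)] .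
  moreover have "Q = h ` P"
    using assms(1) by (simp add: bij_betw_def)
  ultimately show ?thesis
    using assms(2,3) by simp
qed

lemma locally_quasi_compact_alexandrov_topology:
  "locally_quasi_compact (alexandrov_topology P)"
  unfolding locally_quasi_compact_def topspace_alexandrov_topology
proof
  fix a assume "a \<in> P"
  then have a: "a \<in> {b\<in>P. a \<le> b}"
    by simp
  \<comment> \<open>The upset of a point is its smallest open neighbourhood,
    so one member of any open cover covers it.\<close>
  have "compactin (alexandrov_topology P) {b\<in>P. a \<le> b}"
    unfolding compactin_def
  proof (intro conjI allI impI)
    fix \<U> assume \<U>: "(\<forall>U\<in>\<U>. openin (alexandrov_topology P) U) \<and> {b\<in>P. a \<le> b} \<subseteq> \<Union>\<U>"
    then obtain U where U: "U \<in> \<U>" "a \<in> U"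
      using a by blast
    then have "{b\<in>P. a \<le> b} \<subseteq> U"
      using \<U> openin_alexandrov_topology_upward by blast
    then show "\<exists>\<F>. finite \<F> \<and> \<F> \<subseteq> \<U> \<and> {b\<in>P. a \<le> b} \<subseteq> \<Union>\<F>"
      using U by (intro exI[of _ "{U}"]) simp
  qed simp
  then show "\<exists>N U. openin (alexandrov_topology P) U \<and> a \<in> U \<and> U \<subseteq> N \<and>
      compactin (alexandrov_topology P) N"
    using a openin_alexandrov_topology_upset by blast
qed

lemma scattered_space_alexandrov_topology:
  assumes "\<And>S. S \<subseteq> P \<Longrightarrow> S \<noteq> {} \<Longrightarrow> \<exists>x\<in>S. \<forall>y\<in>S. x \<le> y \<longrightarrow> y = x"
  shows "scattered_space (alexandrov_topology P)"
  unfolding scattered_space_def topspace_alexandrov_topology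
proof (intro allI impI)
  fix S assume S: "S \<subseteq> P \<and> S \<noteq> {}"
  then obtain x where x: "x \<in> S" "\<forall>y\<in>S. x \<le> y \<longrightarrow> y = x"
    using assms by meson
  then have "{y\<in>P. x \<le> y} \<inter> S = {x}"
    using S by (blast intro: order_refl)
  then show "\<exists>x\<in>S. \<exists>U. openin (alexandrov_topology P) U \<and> U \<inter> S = {x}"
    using x(1) openin_alexandrov_topology_upset by blast
qed

lemma not_singletons_closed_alexandrov_topology:
  assumes "a \<in> P" "b \<in> P" "a < b"
  shows "\<not> singletons_closed (alexandrov_topology P)"
proof
  assume "singletons_closed (alexandrov_topology P)"
  then have "openin (alexandrov_topology P) (P - {b})"
    using assms(2) by (simp add: singletons_closed_def closedin_def)
  moreover have "a \<in> P - {b}"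
    using assms less_irrefl by blast
  ultimately have "b \<in> P - {b}"
    using assms(2) less_imp_le[OF assms(3)] by (rule openin_alexandrov_topology_upward)
  then show False
    by simp
qed

lemma not_zero_dimensional_alexandrov_topology:
  assumes "x \<in> P" "y \<in> P" "z \<in> P" "x \<le> z" "y \<le> z" "\<not> x \<le> y"
  shows "\<not> zero_dimensional (alexandrov_topology P)"
proof
  assume "zero_dimensional (alexandrov_topology P)"
  then obtain \<B>
    where clopen: "\<forall>B\<in>\<B>. openin (alexandrov_topology P) B \<and> closedin (alexandrov_topology P) B"
    and basis: "\<forall>U. openin (alexandrov_topology P) U \<longrightarrow> (\<exists>\<U>. \<U> \<subseteq> \<B> \<and> \<Union>\<U> = U)"
    unfolding zero_dimensional_def by blast
  obtain \<U> where \<U>: "\<U> \<subseteq> \<B>" "\<Union>\<U> = {b\<in>P. x \<le> b}"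
    using basis[rule_format, OF openin_alexandrov_topology_upset[of P x]] by metis
  then have "x \<in> \<Union>\<U>"
    using assms(1) by simp
  then obtain B where "B \<in> \<U>" "x \<in> B"
    by blast
  then have B: "B \<in> \<B>" "x \<in> B" "B \<subseteq> {b\<in>P. x \<le> b}"
    using \<U> Union_upper[OF \<open>B \<in> \<U>\<close>] by auto
  \<comment> \<open>A clopen set containing x contains z, and then so does its complement, which contains y.\<close>
  have "z \<in> B"
    using clopen B(1,2) assms(3,4) by (blast intro: openin_alexandrov_topology_upward)
  moreover have "openin (alexandrov_topology P) (P - B)" "y \<in> P - B"
    using clopen B assms(2,6) by (auto simp: closedin_def)
  then have "z \<in> P - B"
    using assms(3,5) by (rule openin_alexandrov_topology_upward)
  ultimately show False
    by blast
qed

section \<open>Topologies of pointwise convergence\<close>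

lemma openin_pointwise_topology:
  "openin (pointwise_topology S G) U \<longleftrightarrow> U \<subseteq> G \<and>
     (\<forall>g\<in>U. \<exists>F. finite F \<and> F \<subseteq> S \<and> {h\<in>G. \<forall>x\<in>F. h x = g x} \<subseteq> U)"
  by (simp add: pointwise_topology_def istopology_pointwise)

lemma topspace_pointwise_topology [simp]: "topspace (pointwise_topology S G) = G"
  unfolding topspace_def openin_pointwise_topology by blast

lemma continuous_map_pointwise_topologyI:
  assumes "\<psi> ` G \<subseteq> H"
    and local: "\<And>g y. g \<in> G \<Longrightarrow> y \<in> T \<Longrightarrow>
      \<exists>F. finite F \<and> F \<subseteq> S \<and> (\<forall>h\<in>G. (\<forall>x\<in>F. h x = g x) \<longrightarrow> \<psi> h y = \<psi> g y)"
  shows "continuous_map (pointwise_topology S G) (pointwise_topology T H) \<psi>"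
  unfolding continuous_map topspace_pointwise_topology
proof (intro conjI allI impI)
  fix U assume U: "openin (pointwise_topology T H) U"
  show "openin (pointwise_topology S G) {g \<in> G. \<psi> g \<in> U}"
    unfolding openin_pointwise_topology
  proof (intro conjI ballI)
    fix g assume g: "g \<in> {g \<in> G. \<psi> g \<in> U}"
    then obtain F' where F': "finite F'" "F' \<subseteq> T" "{h\<in>H. \<forall>y\<in>F'. h y = \<psi> g y} \<subseteq> U"
      using U unfolding openin_pointwise_topology by blast
    have "\<forall>y\<in>F'. \<exists>F. finite F \<and> F \<subseteq> S \<and> (\<forall>h\<in>G. (\<forall>x\<in>F. h x = g x) \<longrightarrow> \<psi> h y = \<psi> g y)"
      using local g F'(2) by blast
    then obtain F where F: "\<forall>y\<in>F'. finite (F y) \<and> F y \<subseteq> S \<and>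
        (\<forall>h\<in>G. (\<forall>x\<in>F y. h x = g x) \<longrightarrow> \<psi> h y = \<psi> g y)"
      by (rule bchoice[THEN exE])
    have "{h\<in>G. \<forall>x\<in>(\<Union>y\<in>F'. F y). h x = g x} \<subseteq> {g \<in> G. \<psi> g \<in> U}"
    proof
      fix h assume h: "h \<in> {h\<in>G. \<forall>x\<in>(\<Union>y\<in>F'. F y). h x = g x}"
      then have "\<psi> h \<in> {h\<in>H. \<forall>y\<in>F'. h y = \<psi> g y}"
        using F assms(1) by auto
      then show "h \<in> {g \<in> G. \<psi> g \<in> U}"
        using F'(3) h by blast
    qed
    moreover have "finite (\<Union>y\<in>F'. F y)" "(\<Union>y\<in>F'. F y) \<subseteq> S"
      using F F'(1) by auto
    ultimately show "\<exists>F. finite F \<and> F \<subseteq> S \<and> {h\<in>G. \<forall>x\<in>F. h x = g x} \<subseteq> {g \<in> G. \<psi> g \<in> U}"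
      by blast
  qed blast
qed (use assms(1) in blast)

section \<open>The incidence poset of a graph\<close>

definition incidence_poset :: "'v set \<Rightarrow> 'v set set \<Rightarrow> ('v set \<times> nat) set" where
  "incidence_poset V E = (\<lambda>v. ({v}, 0)) ` V \<union> (\<lambda>e. (e, 1)) ` E"

text \<open>Stated for an arbitrary pair because the simp rule One_nat_def turns the level 1 into
  Suc 0, so that a rule about (e, 1) would never match.\<close>

lemma Pair_mem_incidence_poset_iff [simp]:
  "(A, n) \<in> incidence_poset V E \<longleftrightarrow> (n = 0 \<and> (\<exists>v\<in>V. A = {v})) \<or> (n = 1 \<and> A \<in> E)"
  by (auto simp: incidence_poset_def)

lemma incidence_posetE:
  assumes "a \<in> incidence_poset V E"
  obtains (vertex) v where "v \<in> V" "a = ({v}, 0)" | (edge) e where "e \<in> E" "a = (e, 1)"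
  using assms unfolding incidence_poset_def by blast

context
  fixes V :: "'v set" and E :: "'v set set"
  assumes graph: "is_graph V E"
begin

lemma fst_incidence_poset_subset:
  assumes "a \<in> incidence_poset V E"
  shows "fst a \<subseteq> V"
  using assms graph by (cases rule: incidence_posetE) (auto simp: is_graph_def)

lemma card_fst_incidence_poset:
  assumes "a \<in> incidence_poset V E"
  shows "finite (fst a) \<and> card (fst a) = snd a + 1"
  using assms graph by (cases rule: incidence_posetE) (auto simp: is_graph_def card_2_iff)

lemma snd_incidence_poset_le:
  assumes "a \<in> incidence_poset V E"
  shows "snd a \<le> 1"
  using assms by (cases rule: incidence_posetE) auto

lemma fst_incidence_poset:
  assumes "a \<in> incidence_poset V E"
  shows "fst a = {v\<in>V. ({v}, 0) \<le> a}"
  using fst_incidence_poset_subset[OF assms] by (auto simp: less_eq_prod_def)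

lemma incidence_poset_less:
  assumes "a \<in> incidence_poset V E" "b \<in> incidence_poset V E" "a < b"
  shows "snd a = 0 \<and> snd b = 1"
proof -
  have le: "fst a \<subseteq> fst b" "snd a \<le> snd b" and "a \<noteq> b"
    using assms(3) by (auto simp: less_le less_eq_prod_def)
  \<comment> \<open>The level of a point is one less than its number of vertices,
    so comparable points of equal level coincide.\<close>
  have "snd a \<noteq> snd b"
  proof
    assume "snd a = snd b"
    then have "fst a = fst b"
      using le(1) card_fst_incidence_poset[OF assms(1)] card_fst_incidence_poset[OF assms(2)]
      by (metis card_subset_eq)
    with \<open>snd a = snd b\<close> \<open>a \<noteq> b\<close> show False
      by (simp add: prod_eq_iff)
  qed
  then show ?thesis
    using le(2) snd_incidence_poset_le[OF assms(2)] by linarith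
qed

lemma incidence_poset_minimal_iff:
  assumes "a \<in> incidence_poset V E"
  shows "(\<forall>b\<in>incidence_poset V E. b \<le> a \<longrightarrow> b = a) \<longleftrightarrow> snd a = 0"
proof
  assume minimal: "\<forall>b\<in>incidence_poset V E. b \<le> a \<longrightarrow> b = a"
  obtain v where "v \<in> fst a"
    using card_fst_incidence_poset[OF assms] by (metis add_is_0 card.empty ex_in_conv one_neq_zero)
  then have "({v}, 0) \<in> incidence_poset V E" "({v}, 0) \<le> a"
    using fst_incidence_poset_subset[OF assms] by (auto simp: less_eq_prod_def)
  then show "snd a = 0"
    using minimal by (metis snd_conv)
next
  assume "snd a = 0"
  then show "\<forall>b\<in>incidence_poset V E. b \<le> a \<longrightarrow> b = a"
    using assms incidence_poset_less by (metis less_le zero_neq_one)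
qed

lemma scattered_space_incidence_poset:
  "scattered_space (alexandrov_topology (incidence_poset V E))"
proof (rule scattered_space_alexandrov_topology)
  fix S assume S: "S \<subseteq> incidence_poset V E" "S \<noteq> {}"
  show "\<exists>x\<in>S. \<forall>y\<in>S. x \<le> y \<longrightarrow> y = x"
  proof (cases "\<exists>x\<in>S. snd x = 1")
    case True
    then obtain x where "x \<in> S" "snd x = 1"
      by blast
    then show ?thesis
      using S(1) incidence_poset_less by (metis less_le subsetD zero_neq_one)
  next
    case False
    obtain x where "x \<in> S"
      using S(2) by blast
    then show ?thesis
      using False S(1) incidence_poset_less by (metis less_le subsetD)
  qed
qed

end

section \<open>Automorphisms of the incidence poset\<close>

definition vertex_perm :: "'v set \<Rightarrow> ('v set \<times> nat \<Rightarrow> 'v set \<times> nat) \<Rightarrow> 'v \<Rightarrow> 'v" where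
  "vertex_perm V h v = (if v \<in> V then the_elem (fst (h ({v}, 0))) else v)"

definition incidence_perm :: "'v set \<Rightarrow> 'v set set \<Rightarrow> ('v \<Rightarrow> 'v) \<Rightarrow> 'v set \<times> nat \<Rightarrow> 'v set \<times> nat" where
  "incidence_perm V E f a = (if a \<in> incidence_poset V E then (f ` fst a, snd a) else a)"

context
  fixes V :: "'v set" and E :: "'v set set" and h :: "'v set \<times> nat \<Rightarrow> 'v set \<times> nat"
  assumes graph: "is_graph V E"
    and h_bij: "bij_betw h (incidence_poset V E) (incidence_poset V E)"
    and h_iso: "\<forall>a\<in>incidence_poset V E. \<forall>b\<in>incidence_poset V E. h a \<le> h b \<longleftrightarrow> a \<le> b"
begin

lemma incidence_automorphism_snd:
  assumes "a \<in> incidence_poset V E"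
  shows "snd (h a) = snd a"
proof -
  have "h a \<in> incidence_poset V E"
    using bij_betwE[OF h_bij] assms by blast
  then have "snd (h a) = 0 \<longleftrightarrow> snd a = 0"
    using order_iso_minimal_iff[OF h_bij h_iso assms] incidence_poset_minimal_iff[OF graph] assms
    by simp
  then show ?thesis
    using snd_incidence_poset_le[OF graph assms] snd_incidence_poset_le[OF graph \<open>h a \<in> _\<close>]
    by linarith
qed

lemma incidence_automorphism_vertex:
  assumes "v \<in> V"
  shows "vertex_perm V h v \<in> V \<and> h ({v}, 0) = ({vertex_perm V h v}, 0)"
proof -
  have "h ({v}, 0) \<in> incidence_poset V E" "snd (h ({v}, 0)) = 0"
    using assms bij_betwE[OF h_bij] incidence_automorphism_snd by auto
  then obtain w where "w \<in> V" "h ({v}, 0) = ({w}, 0)"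
    by (cases rule: incidence_posetE) auto
  then show ?thesis
    using assms by (simp add: vertex_perm_def)
qed

lemma incidence_automorphism_preimage:
  assumes "b \<in> incidence_poset V E"
  shows "\<exists>a\<in>incidence_poset V E. h a = b \<and> snd a = snd b"
proof -
  have "b \<in> h ` incidence_poset V E"
    using assms bij_betw_imp_surj_on[OF h_bij] by simp
  then obtain a where "a \<in> incidence_poset V E" "h a = b"
    by blast
  moreover have "snd a = snd b"
    using incidence_automorphism_snd[OF \<open>a \<in> _\<close>] \<open>h a = b\<close> by simp
  ultimately show ?thesis
    by blast
qed

lemma bij_betw_vertex_perm: "bij_betw (vertex_perm V h) V V"
proof (rule bij_betw_imageI)
  show "inj_on (vertex_perm V h) V"
  proof (rule inj_onI)
    fix u v assume "u \<in> V" "v \<in> V" "vertex_perm V h u = vertex_perm V h v"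
    then have "h ({u}, 0) = h ({v}, 0)"
      using incidence_automorphism_vertex by simp
    then show "u = v"
      using \<open>u \<in> V\<close> \<open>v \<in> V\<close> bij_betw_imp_inj_on[OF h_bij] by (simp add: inj_on_eq_iff)
  qed
  have "w \<in> vertex_perm V h ` V" if w: "w \<in> V" for w
  proof -
    obtain a where a: "a \<in> incidence_poset V E" "h a = ({w}, 0)" "snd a = 0"
      using incidence_automorphism_preimage[of "({w}, 0)"] w by auto
    then obtain u where u: "u \<in> V" "a = ({u}, 0)"
      by (cases rule: incidence_posetE) auto
    then have "w = vertex_perm V h u"
      using incidence_automorphism_vertex[OF u(1)] a(2) by simp
    then show ?thesis
      using u(1) by blast
  qed
  moreover have "vertex_perm V h ` V \<subseteq> V"
    using incidence_automorphism_vertex by blast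
  ultimately show "vertex_perm V h ` V = V"
    by blast
qed

lemma incidence_automorphism_eq:
  assumes "a \<in> incidence_poset V E"
  shows "h a = (vertex_perm V h ` fst a, snd a)"
proof -
  let ?\<phi> = "vertex_perm V h"
  have ha: "h a \<in> incidence_poset V E"
    using bij_betwE[OF h_bij] assms by blast
  have vertex_le_iff: "({?\<phi> u}, 0) \<le> h a \<longleftrightarrow> ({u}, 0) \<le> a" if "u \<in> V" for u
  proof -
    have "({?\<phi> u}, 0) = h ({u}, 0)"
      using incidence_automorphism_vertex[OF that] by simp
    then show ?thesis
      using h_iso[rule_format, of "({u}, 0)" a] assms that by simp
  qed
  have "fst (h a) = ?\<phi> ` fst a"
  proof (intro equalityI subsetI)
    fix w assume "w \<in> fst (h a)"
    then have "w \<in> V" "({w}, 0) \<le> h a"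
      using fst_incidence_poset[OF graph ha] by auto
    moreover have "w \<in> ?\<phi> ` V"
      using \<open>w \<in> V\<close> bij_betw_imp_surj_on[OF bij_betw_vertex_perm] by simp
    then obtain u where "u \<in> V" "w = ?\<phi> u"
      by blast
    ultimately have "u \<in> fst a"
      using vertex_le_iff fst_incidence_poset[OF graph assms] by auto
    then show "w \<in> ?\<phi> ` fst a"
      using \<open>w = ?\<phi> u\<close> by blast
  next
    fix w assume "w \<in> ?\<phi> ` fst a"
    then obtain u where "u \<in> V" "({u}, 0) \<le> a" "w = ?\<phi> u"
      using fst_incidence_poset[OF graph assms] by auto
    then show "w \<in> fst (h a)"
      using vertex_le_iff incidence_automorphism_vertex fst_incidence_poset[OF graph ha] by auto
  qed
  then show ?thesis
    using incidence_automorphism_snd[OF assms] by (simp add: prod_eq_iff)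
qed

lemma vertex_perm_in_graph_aut: "vertex_perm V h \<in> graph_aut V E"
proof -
  let ?\<phi> = "vertex_perm V h"
  have "?\<phi> ` e \<in> E" if "e \<in> E" for e
  proof -
    have e: "(e, 1) \<in> incidence_poset V E"
      using that by simp
    then have "h (e, 1) \<in> incidence_poset V E"
      using bij_betwE[OF h_bij] by blast
    then show ?thesis
      using incidence_automorphism_eq[OF e] by simp
  qed
  moreover have "e' \<in> (\<lambda>e. ?\<phi> ` e) ` E" if e': "e' \<in> E" for e'
  proof -
    obtain a where a: "a \<in> incidence_poset V E" "h a = (e', 1)" "snd a = 1"
      using incidence_automorphism_preimage[of "(e', 1)"] e' by auto
    then obtain e where "e \<in> E" "a = (e, 1)"
      by (cases rule: incidence_posetE) auto
    then show ?thesis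
      using a(2) incidence_automorphism_eq[OF a(1)] by force
  qed
  ultimately have "(\<lambda>e. ?\<phi> ` e) ` E = E"
    by blast
  then show ?thesis
    using bij_betw_vertex_perm by (simp add: graph_aut_def sym_group_def vertex_perm_def)
qed

end

context
  fixes V :: "'v set" and E :: "'v set set" and f :: "'v \<Rightarrow> 'v"
  assumes graph: "is_graph V E" and f: "f \<in> graph_aut V E"
begin

lemma incidence_perm_image: "incidence_perm V E f ` incidence_poset V E = incidence_poset V E"
proof -
  have fV: "f ` V = V" and fE: "(\<lambda>e. f ` e) ` E = E"
    using f by (simp_all add: graph_aut_def sym_group_def bij_betw_def)
  have "incidence_perm V E f ` incidence_poset V E =
      (\<lambda>a. (f ` fst a, snd a)) ` incidence_poset V E"
    by (rule image_cong) (simp_all add: incidence_perm_def)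
  also have "\<dots> = (\<lambda>v. ({v}, 0)) ` (f ` V) \<union> (\<lambda>e. (e, 1)) ` ((\<lambda>e. f ` e) ` E)"
    by (simp add: incidence_poset_def image_Un image_image)
  also have "\<dots> = incidence_poset V E"
    by (simp only: fV fE incidence_poset_def)
  finally show ?thesis .
qed

lemma incidence_perm_le_iff:
  assumes "a \<in> incidence_poset V E" "b \<in> incidence_poset V E"
  shows "incidence_perm V E f a \<le> incidence_perm V E f b \<longleftrightarrow> a \<le> b"
proof -
  have "inj_on f V"
    using f by (simp add: graph_aut_def sym_group_def bij_betw_def)
  then have "f ` fst a \<subseteq> f ` fst b \<longleftrightarrow> fst a \<subseteq> fst b"
    using inj_on_image_subset_iff fst_incidence_poset_subset[OF graph] assms by blast
  then show ?thesis
    using assms by (simp add: incidence_perm_def less_eq_prod_def)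
qed

lemma incidence_perm_in_homeo_group:
  "incidence_perm V E f \<in> homeo_group (alexandrov_topology (incidence_poset V E))"
proof -
  have "inj_on (incidence_perm V E f) (incidence_poset V E)"
    using incidence_perm_le_iff by (intro inj_onI) (metis order_antisym order_refl)
  then have "bij_betw (incidence_perm V E f) (incidence_poset V E) (incidence_poset V E)"
    using incidence_perm_image by (simp add: bij_betw_def)
  moreover have "\<forall>x. x \<notin> incidence_poset V E \<longrightarrow> incidence_perm V E f x = x"
    by (simp add: incidence_perm_def)
  ultimately show ?thesis
    unfolding homeo_group_alexandrov_topology using incidence_perm_le_iff by blast
qed

lemma vertex_perm_incidence_perm: "vertex_perm V (incidence_perm V E f) = f"
proof
  fix v
  have "f v = v" if "v \<notin> V"
    using f that by (simp add: graph_aut_def sym_group_def)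
  then show "vertex_perm V (incidence_perm V E f) v = f v"
    by (simp add: vertex_perm_def incidence_perm_def)
qed

end

context
  fixes V :: "'v set" and E :: "'v set set"
  assumes graph: "is_graph V E"
begin

lemma homeo_group_incidence_posetD:
  assumes "h \<in> homeo_group (alexandrov_topology (incidence_poset V E))"
  shows "bij_betw h (incidence_poset V E) (incidence_poset V E)"
    and "\<forall>a\<in>incidence_poset V E. \<forall>b\<in>incidence_poset V E. h a \<le> h b \<longleftrightarrow> a \<le> b"
    and "\<And>x. x \<notin> incidence_poset V E \<Longrightarrow> h x = x"
  using assms unfolding homeo_group_alexandrov_topology by blast+

lemma incidence_perm_vertex_perm:
  assumes "h \<in> homeo_group (alexandrov_topology (incidence_poset V E))"
  shows "incidence_perm V E (vertex_perm V h) = h"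
proof
  fix a
  show "incidence_perm V E (vertex_perm V h) a = h a"
    using incidence_automorphism_eq[OF graph homeo_group_incidence_posetD(1,2)[OF assms]]
      homeo_group_incidence_posetD(3)[OF assms]
    by (simp add: incidence_perm_def)
qed

lemma vertex_perm_comp:
  assumes "h \<in> homeo_group (alexandrov_topology (incidence_poset V E))"
    and "k \<in> homeo_group (alexandrov_topology (incidence_poset V E))"
  shows "vertex_perm V (h \<circ> k) = vertex_perm V h \<circ> vertex_perm V k"
proof
  fix v
  note h_vertex =
    incidence_automorphism_vertex[OF graph homeo_group_incidence_posetD(1,2)[OF assms(1)]]
  note k_vertex =
    incidence_automorphism_vertex[OF graph homeo_group_incidence_posetD(1,2)[OF assms(2)]]
  show "vertex_perm V (h \<circ> k) v = (vertex_perm V h \<circ> vertex_perm V k) v"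
  proof (cases "v \<in> V")
    case True
    then show ?thesis
      using k_vertex[OF True] h_vertex[of "vertex_perm V k v"] by (simp add: vertex_perm_def)
  next
    case False
    then show ?thesis
      by (simp add: vertex_perm_def)
  qed
qed

lemma top_group_iso_vertex_perm:
  defines "X \<equiv> alexandrov_topology (incidence_poset V E)"
  shows "top_group_iso (homeo_group X) (pointwise_topology (incidence_poset V E) (homeo_group X))
     (graph_aut V E) (pointwise_topology V (graph_aut V E)) (vertex_perm V)"
proof -
  have vertex_perm_in: "vertex_perm V ` homeo_group X \<subseteq> graph_aut V E"
    using vertex_perm_in_graph_aut[OF graph] homeo_group_incidence_posetD unfolding X_def by blast
  have incidence_perm_in: "incidence_perm V E ` graph_aut V E \<subseteq> homeo_group X"
    using incidence_perm_in_homeo_group[OF graph] unfolding X_def by blast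
  have "continuous_map (pointwise_topology (incidence_poset V E) (homeo_group X))
      (pointwise_topology V (graph_aut V E)) (vertex_perm V)"
  proof (rule continuous_map_pointwise_topologyI[OF vertex_perm_in])
    fix g y assume "y \<in> V"
    then show "\<exists>F. finite F \<and> F \<subseteq> incidence_poset V E \<and>
        (\<forall>h\<in>homeo_group X. (\<forall>x\<in>F. h x = g x) \<longrightarrow> vertex_perm V h y = vertex_perm V g y)"
      by (intro exI[of _ "{({y}, 0)}"]) (simp add: vertex_perm_def)
  qed
  moreover have "continuous_map (pointwise_topology V (graph_aut V E))
      (pointwise_topology (incidence_poset V E) (homeo_group X)) (incidence_perm V E)"
  proof (rule continuous_map_pointwise_topologyI[OF incidence_perm_in])
    fix g a assume a: "a \<in> incidence_poset V E"
    then have "finite (fst a)" "fst a \<subseteq> V"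
      using card_fst_incidence_poset[OF graph] fst_incidence_poset_subset[OF graph] by auto
    then show "\<exists>F. finite F \<and> F \<subseteq> V \<and>
        (\<forall>h\<in>graph_aut V E. (\<forall>x\<in>F. h x = g x) \<longrightarrow> incidence_perm V E h a = incidence_perm V E g a)"
      by (intro exI[of _ "fst a"]) (simp add: incidence_perm_def cong: image_cong)
  qed
  moreover have left_inverse: "\<forall>h\<in>homeo_group X. incidence_perm V E (vertex_perm V h) = h"
    using incidence_perm_vertex_perm unfolding X_def by blast
  moreover have right_inverse: "\<forall>f\<in>graph_aut V E. vertex_perm V (incidence_perm V E f) = f"
    using vertex_perm_incidence_perm[OF graph] by blast
  ultimately have "homeomorphic_maps (pointwise_topology (incidence_poset V E) (homeo_group X))
      (pointwise_topology V (graph_aut V E)) (vertex_perm V) (incidence_perm V E)"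
    by (simp add: homeomorphic_maps_def)
  moreover have "bij_betw (vertex_perm V) (homeo_group X) (graph_aut V E)"
    using left_inverse right_inverse vertex_perm_in incidence_perm_in by (rule bij_betw_byWitness)
  ultimately show ?thesis
    unfolding top_group_iso_def X_def using vertex_perm_comp homeomorphic_map_maps by blast
qed

end

theorem proposition24:
  fixes V :: "'v set" and E :: "'v set set"
  assumes "is_graph V E"
  shows "\<exists>X :: ('v set \<times> nat) topology.
           scattered_space X \<and> locally_quasi_compact X \<and>
           \<not> singletons_closed X \<and> \<not> zero_dimensional X \<and>
           (\<exists>\<phi>. top_group_iso (homeo_group X) (pointwise_topology (topspace X) (homeo_group X))
                   (graph_aut V E) (pointwise_topology V (graph_aut V E)) \<phi>)"
proof -
  let ?P = "incidence_poset V E"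
  obtain e where "e \<in> E"
    using assms unfolding is_graph_def by (metis ex_in_conv)
  then have "card e = 2"
    using assms unfolding is_graph_def by blast
  then obtain x y where "e = {x, y}" "x \<noteq> y"
    unfolding card_2_iff by blast
  let ?vx = "({x}, 0::nat)" and ?vy = "({y}, 0::nat)" and ?e = "(e, 1::nat)"
  have points: "?vx \<in> ?P" "?vy \<in> ?P" "?e \<in> ?P" "?vx < ?e" "?vy \<le> ?e" "\<not> ?vx \<le> ?vy"
    using \<open>e \<in> E\<close> \<open>e = {x, y}\<close> \<open>x \<noteq> y\<close> assms by (auto simp: is_graph_def less_le)
  have "\<not> singletons_closed (alexandrov_topology ?P)"
    using points(1,3,4) by (rule not_singletons_closed_alexandrov_topology)
  moreover have "\<not> zero_dimensional (alexandrov_topology ?P)"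
    using points(1-3) less_imp_le[OF points(4)] points(5,6)
    by (rule not_zero_dimensional_alexandrov_topology)
  ultimately show ?thesis
    using scattered_space_incidence_poset[OF assms] locally_quasi_compact_alexandrov_topology
      top_group_iso_vertex_perm[OF assms]
    by (intro exI[of _ "alexandrov_topology ?P"]) auto
qed

end
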